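(* There exist constants $K$ and $M$ such that the following holds. Let $k\ge K$ be an integer and $a,b,b'\in(\frac1{10},10)$ with $b\le b'$. Let $u_1=\cos(ky)e^{-k\sqrt b\,t}$ and $u_2=\cos(ky)e^{-k\sqrt{b'}\,t}$, which solve respectively $\ddot u_1+\operatorname{div}\left[\begin{pmatrix}a&0\\0&b\end{pmatrix}\nabla u_1\right]=0$ and $\ddot u_2+\operatorname{div}\left[\begin{pmatrix}a&0\\0&b'\end{pmatrix}\nabla u_2\right]=0$. For every $t_1\ge0$ and $c_1>0$, with $c_2>0$ defined by $c_1e^{-k\sqrt b\,t_1}=c_2e^{-k\sqrt{b'}\,t_1}$, there exist a $C^2$ function $u$ and a $C^1$ real $2\times 2$ matrix function $A$ in the regularity class $R(80,10)$ with $\ddot u+\operatorname{div}(A\nabla u)=0$ on $\mathbb{T}^2\times\mathbb{R}$, such that $u=c_1u_1$, $A=\begin{pmatrix}a&0\\0&b\end{pmatrix}$ for $t\le t_1$, and $u=c_2u_2$, $A=\begin{pmatrix}a&0\\0&b'\end{pmatrix}$ for $t\ge t_1+400$. Moreover, for $t\in[t_1,t_1+400]$, $u=g(t)\cos(ky)$ with $g\in C^2$ and $|g^{(\alpha)}(t)|\le Mc_1k^\alpha e^{-k\sqrt b\,t}$ for $0\le\alpha\le2$.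
   Context: $\mathbb{T}^2=(\mathbb{R}/2\pi\mathbb{Z})^2$ with coordinates $(x,y)$; $t$ the third coordinate. $\ddot u+\operatorname{div}(A\nabla u)$ means $\partial_t^2u+\sum_{i,j\in\{x,y\}}\partial_i(A_{ij}\partial_ju)$. Regularity class $R(\Lambda,C)$: $\Lambda^{-1}|\xi|^2\le\xi^TA\xi\le\Lambda|\xi|^2$ for all $\xi\in\mathbb{R}^2$ at every point, and the entries of $A$ are $C^1$ with all first partial derivatives in $x,y,t$ bounded by $C$ in absolute value. *)

theory Defs
  imports "HOL-Analysis.Analysis"
begin

text \<open>Points of T^2 x R are represented as (x,y,t) :: real \<times> real \<times> real;
  functions on T^2 x R are functions on R^3 that are 2pi-periodic in x and y.\<close>

type_synonym pt = "real \<times> real \<times> real"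

definition ex :: pt where "ex = (1, 0, 0)"
definition ey :: pt where "ey = (0, 1, 0)"
definition et :: pt where "et = (0, 0, 1)"

definition pd :: "(pt \<Rightarrow> real) \<Rightarrow> pt \<Rightarrow> pt \<Rightarrow> real" where
  "pd f v p = deriv (\<lambda>s. f (p + s *\<^sub>R v)) 0"

definition C1_fun :: "(pt \<Rightarrow> real) \<Rightarrow> bool" where
  "C1_fun f \<longleftrightarrow> continuous_on UNIV f \<and>
     (\<forall>v\<in>{ex, ey, et}. (\<forall>p. (\<lambda>s. f (p + s *\<^sub>R v)) differentiable (at 0))
        \<and> continuous_on UNIV (pd f v))"

definition C2_fun :: "(pt \<Rightarrow> real) \<Rightarrow> bool" where
  "C2_fun f \<longleftrightarrow> C1_fun f \<and> (\<forall>v\<in>{ex, ey, et}. C1_fun (pd f v))"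

definition C2_real :: "(real \<Rightarrow> real) \<Rightarrow> bool" where
  "C2_real g \<longleftrightarrow> (\<forall>t. g differentiable (at t)) \<and> (\<forall>t. deriv g differentiable (at t))
     \<and> continuous_on UNIV (deriv (deriv g))"

definition periodic_T2 :: "(pt \<Rightarrow> 'a) \<Rightarrow> bool" where
  "periodic_T2 f \<longleftrightarrow> (\<forall>x y t. f (x + 2*pi, y, t) = f (x, y, t) \<and> f (x, y + 2*pi, t) = f (x, y, t))"

definition sdir :: "2 \<Rightarrow> pt" where "sdir i = (if i = 1 then ex else ey)"

definition diag2 :: "real \<Rightarrow> real \<Rightarrow> real^2^2" where
  "diag2 a b = (\<chi> i j. if i = j then (if i = 1 then a else b) else 0)"

definition reg_class :: "real \<Rightarrow> real \<Rightarrow> (pt \<Rightarrow> real^2^2) \<Rightarrow> bool" where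
  "reg_class \<Lambda> C A \<longleftrightarrow>
     (\<forall>p \<xi>. (1/\<Lambda>) * norm \<xi> ^ 2 \<le> \<xi> \<bullet> (A p *v \<xi>) \<and> \<xi> \<bullet> (A p *v \<xi>) \<le> \<Lambda> * norm \<xi> ^ 2)
     \<and> (\<forall>i j. C1_fun (\<lambda>p. A p $ i $ j))
     \<and> (\<forall>i j. \<forall>v\<in>{ex, ey, et}. \<forall>p. \<bar>pd (\<lambda>q. A q $ i $ j) v p\<bar> \<le> C)"

definition solves_eq :: "(pt \<Rightarrow> real^2^2) \<Rightarrow> (pt \<Rightarrow> real) \<Rightarrow> bool" where
  "solves_eq A u \<longleftrightarrow> (\<forall>p. pd (pd u et) et p +
      (\<Sum>i\<in>UNIV. pd (\<lambda>q. \<Sum>j\<in>UNIV. A q $ i $ j * pd u (sdir j) q) (sdir i) p) = 0)"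

end

theory Submission
  imports Defs
begin

text \<open>We look for \<open>u = g(t) cos(ky)\<close> with \<open>A = diag(a, \<beta>(t))\<close>; the equation then
  reduces to the ODE \<open>g'' = k\<^sup>2 \<beta> g\<close>. Put \<open>g = c1 exp(-k \<Phi>)\<close> for a phase \<open>\<Phi>\<close>
  whose slope moves from \<open>sqrt b\<close> to \<open>sqrt b'\<close> during \<open>[t1, t1 + 400]\<close> along a
  \<open>C\<^sup>2\<close> ramp, and read off \<open>\<beta> = \<Phi>'\<^sup>2 - \<Phi>''/k\<close>. Since \<open>\<Phi>''\<close> and \<open>\<Phi>'''\<close> are
  small and \<open>k \<ge> 1000\<close>, \<open>\<beta>\<close> stays within \<open>[1/80, 80]\<close> with \<open>|\<beta>'| \<le> 10\<close>. The ramp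
  is normalised so that after the transition \<open>\<Phi> t = sqrt b' t - (sqrt b' - sqrt b) t1\<close>,
  which is exactly the matching condition that defines \<open>c2\<close>.\<close>

section \<open>A smooth ramp\<close>

lemma DERIV_if_le:
  fixes f g f' g' :: "real \<Rightarrow> real"
  assumes "\<And>x. (f has_real_derivative f' x) (at x)"
    and "\<And>x. (g has_real_derivative g' x) (at x)"
    and "f c = g c" "f' c = g' c"
  shows "((\<lambda>x. if x \<le> c then f x else g x) has_real_derivative (if x \<le> c then f' x else g' x)) (at x)"
proof -
  have "((\<lambda>x. if x \<in> {..c} then f x else g x) has_vector_derivative
    (if x \<in> {..c} then f' x else g' x)) (at x within UNIV)"
    by (rule has_vector_derivative_If_within_closures[where T="{c<..}"])
      (use assms in \<open>auto simp: has_real_derivative_iff_has_vector_derivative[symmetric]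
        intro: has_field_derivative_at_within\<close>)
  then show ?thesis
    by (simp add: has_real_derivative_iff_has_vector_derivative)
qed

definition glue01 :: "(real \<Rightarrow> real) \<Rightarrow> (real \<Rightarrow> real) \<Rightarrow> real \<Rightarrow> real" where
  "glue01 f g s = (if s \<le> 0 then 0 else if s \<le> 1 then f s else g s)"

lemma DERIV_glue01:
  assumes f: "\<And>s. (f has_real_derivative f' s) (at s)"
    and g: "\<And>s. (g has_real_derivative g' s) (at s)"
    and "f 0 = 0" "f' 0 = 0" "f 1 = g 1" "f' 1 = g' 1"
  shows "(glue01 f g has_real_derivative glue01 f' g' s) (at s)"
proof -
  have "((\<lambda>s. if s \<le> 1 then f s else g s) has_real_derivative (if x \<le> 1 then f' x else g' x)) (at x)"
    for x by (rule DERIV_if_le[OF f g]) (use assms in auto)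
  then have "((\<lambda>s. if s \<le> 0 then 0 else if s \<le> 1 then f s else g s) has_real_derivative
      (if s \<le> 0 then 0 else if s \<le> 1 then f' s else g' s)) (at s)"
    by (intro DERIV_if_le[where f'="\<lambda>_. 0"]) (use assms in auto)
  then show ?thesis
    unfolding glue01_def[abs_def] .
qed

lemma continuous_on_glue01:
  assumes "continuous_on UNIV f" "continuous_on UNIV g" "f 0 = 0" "f 1 = g 1"
  shows "continuous_on UNIV (glue01 f g)"
proof -
  have "continuous_on ({..1} \<union> {1..}) (\<lambda>s. if s \<le> 1 then f s else g s)"
    by (rule continuous_on_cases) (use assms in \<open>auto intro: continuous_on_subset\<close>)
  then have "continuous_on ({..0} \<union> {0..}) (\<lambda>s. if s \<le> 0 then 0 else if s \<le> 1 then f s else g s)"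
    by (intro continuous_on_cases) (use assms in \<open>auto intro: continuous_on_subset\<close>)
  moreover have "{..0} \<union> {0..} = (UNIV :: real set)"
    by auto
  ultimately show ?thesis
    unfolding glue01_def[abs_def] by simp
qed

text \<open>\<open>ramp_poly0\<close> is the polynomial of degree 7 that agrees to third order with \<open>0\<close> at
  \<open>s = 0\<close> and with \<open>s\<close> at \<open>s = 1\<close>. As \<open>ramp0 1 = 1\<close>, the slope \<open>ramp1\<close> has mean one
  on \<open>[0, 1]\<close> and therefore overshoots \<open>1\<close>.\<close>

definition ramp_poly0 :: "real \<Rightarrow> real" where
  "ramp_poly0 s = 20 * s^4 - 45 * s^5 + 36 * s^6 - 10 * s^7"
definition ramp_poly1 :: "real \<Rightarrow> real" where
  "ramp_poly1 s = 80 * s^3 - 225 * s^4 + 216 * s^5 - 70 * s^6"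
definition ramp_poly2 :: "real \<Rightarrow> real" where
  "ramp_poly2 s = 240 * s^2 - 900 * s^3 + 1080 * s^4 - 420 * s^5"
definition ramp_poly3 :: "real \<Rightarrow> real" where
  "ramp_poly3 s = 480 * s - 2700 * s^2 + 4320 * s^3 - 2100 * s^4"

lemma DERIV_ramp_poly0: "(ramp_poly0 has_real_derivative ramp_poly1 s) (at s)"
  unfolding ramp_poly0_def ramp_poly1_def
  by (auto intro!: derivative_eq_intros simp: field_simps eval_nat_numeral)

lemma DERIV_ramp_poly1: "(ramp_poly1 has_real_derivative ramp_poly2 s) (at s)"
  unfolding ramp_poly1_def ramp_poly2_def
  by (auto intro!: derivative_eq_intros simp: field_simps eval_nat_numeral)

lemma DERIV_ramp_poly2: "(ramp_poly2 has_real_derivative ramp_poly3 s) (at s)"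
  unfolding ramp_poly2_def ramp_poly3_def
  by (auto intro!: derivative_eq_intros simp: field_simps eval_nat_numeral)

definition ramp0 :: "real \<Rightarrow> real" where "ramp0 = glue01 ramp_poly0 (\<lambda>s. s)"
definition ramp1 :: "real \<Rightarrow> real" where "ramp1 = glue01 ramp_poly1 (\<lambda>_. 1)"
definition ramp2 :: "real \<Rightarrow> real" where "ramp2 = glue01 ramp_poly2 (\<lambda>_. 0)"
definition ramp3 :: "real \<Rightarrow> real" where "ramp3 = glue01 ramp_poly3 (\<lambda>_. 0)"

lemma DERIV_ramp0: "(ramp0 has_real_derivative ramp1 s) (at s)"
  unfolding ramp0_def ramp1_def
  by (rule DERIV_glue01[OF DERIV_ramp_poly0]) (auto simp: ramp_poly0_def ramp_poly1_def)

lemma DERIV_ramp1: "(ramp1 has_real_derivative ramp2 s) (at s)"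
  unfolding ramp1_def ramp2_def
  by (rule DERIV_glue01[OF DERIV_ramp_poly1]) (auto simp: ramp_poly1_def ramp_poly2_def)

lemma DERIV_ramp2: "(ramp2 has_real_derivative ramp3 s) (at s)"
  unfolding ramp2_def ramp3_def
  by (rule DERIV_glue01[OF DERIV_ramp_poly2]) (auto simp: ramp_poly2_def ramp_poly3_def)

lemma continuous_on_ramp3: "continuous_on UNIV ramp3"
  unfolding ramp3_def
  by (rule continuous_on_glue01) (auto simp: ramp_poly3_def intro!: continuous_intros)

lemma ramp_nonpos:
  assumes "s \<le> 0"
  shows "ramp0 s = 0" "ramp1 s = 0" "ramp2 s = 0"
  using assms by (simp_all add: ramp0_def ramp1_def ramp2_def glue01_def)

lemma ramp_ge_one:
  assumes "1 \<le> s"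
  shows "ramp0 s = s" "ramp1 s = 1" "ramp2 s = 0"
  using assms by (auto simp: ramp0_def ramp1_def ramp2_def glue01_def
      ramp_poly0_def ramp_poly1_def ramp_poly2_def)

lemma mult_one_minus_le_quarter: "s * (1 - s) \<le> (1/4 :: real)"
proof -
  have "0 \<le> (2 * s - 1)^2"
    by simp
  then show ?thesis
    by (simp add: algebra_simps power2_eq_square)
qed

lemma ramp_poly0_nonneg:
  assumes "0 \<le> s" "s \<le> 1"
  shows "0 \<le> ramp_poly0 s"
proof -
  have "8 * ramp_poly0 s = s^4 * (80 * (1 - s)^3 + 3 * (4 * s - 5)^2 + 5)"
    unfolding ramp_poly0_def by (simp add: algebra_simps power2_eq_square power3_eq_cube eval_nat_numeral)
  moreover have "0 \<le> s^4 * (80 * (1 - s)^3 + 3 * (4 * s - 5)^2 + 5)"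
    using assms by (intro mult_nonneg_nonneg add_nonneg_nonneg) auto
  ultimately show ?thesis
    by linarith
qed

lemma ramp_poly1_bounds:
  assumes "0 \<le> s" "s \<le> 1"
  shows "0 \<le> ramp_poly1 s" "ramp_poly1 s \<le> 21/10"
proof -
  have "8 * ramp_poly1 s = s^3 * (3 * (4 * s - 5)^2 + 5) + 560 * (s * (1 - s))^3"
    unfolding ramp_poly1_def by (simp add: algebra_simps power2_eq_square power3_eq_cube eval_nat_numeral)
  moreover have "0 \<le> s^3 * (3 * (4 * s - 5)^2 + 5) + 560 * (s * (1 - s))^3"
    using assms by (intro mult_nonneg_nonneg add_nonneg_nonneg) auto
  ultimately show "0 \<le> ramp_poly1 s"
    by linarith
  have "ramp_poly1 s = 1 - (1 - s)^3 * (1 + 3 * s + 6 * s^2) + 70 * (s * (1 - s))^3"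
    unfolding ramp_poly1_def by (simp add: algebra_simps power2_eq_square power3_eq_cube eval_nat_numeral)
  moreover have "0 \<le> (1 - s)^3 * (1 + 3 * s + 6 * s^2)"
    using assms by (intro mult_nonneg_nonneg add_nonneg_nonneg) auto
  moreover have "(s * (1 - s))^3 \<le> (1/4)^3"
    using assms by (intro power_mono mult_one_minus_le_quarter) auto
  ultimately show "ramp_poly1 s \<le> 21/10"
    by (simp add: power_divide)
qed

lemma ramp_poly2_bound:
  assumes "0 \<le> s" "s \<le> 1"
  shows "\<bar>ramp_poly2 s\<bar> \<le> 15"
proof -
  have "ramp_poly2 s = (s * (1 - s))^2 * (240 - 420 * s)"
    unfolding ramp_poly2_def by (simp add: algebra_simps power2_eq_square power3_eq_cube eval_nat_numeral)
  then have "\<bar>ramp_poly2 s\<bar> = (s * (1 - s))^2 * \<bar>240 - 420 * s\<bar>"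
    by (simp add: abs_mult)
  also have "\<dots> \<le> (1/4)^2 * 240"
    using assms by (intro mult_mono power_mono mult_one_minus_le_quarter) auto
  finally show ?thesis
    by (simp add: power_divide)
qed

lemma ramp_poly3_bound:
  assumes "0 \<le> s" "s \<le> 1"
  shows "\<bar>ramp_poly3 s\<bar> \<le> 9600"
proof -
  have "s^n \<le> 1" "0 \<le> s^n" for n :: nat
    using assms by (simp_all add: power_le_one)
  then show ?thesis
    unfolding ramp_poly3_def using assms by (smt (verit))
qed

lemma ramp0_nonneg: "0 \<le> ramp0 s"
  by (simp add: ramp0_def glue01_def ramp_poly0_nonneg)

lemma ramp1_bounds: "0 \<le> ramp1 s" "ramp1 s \<le> 21/10"
  using ramp_poly1_bounds[of s] by (simp_all add: ramp1_def glue01_def)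

lemma ramp2_bound: "\<bar>ramp2 s\<bar> \<le> 15"
  by (simp add: ramp2_def glue01_def ramp_poly2_bound)

lemma ramp3_bound: "\<bar>ramp3 s\<bar> \<le> 9600"
  by (simp add: ramp3_def glue01_def ramp_poly3_bound)

section \<open>Separated functions \<open>g(t) q(y)\<close>\<close>

definition sep_ty :: "(real \<Rightarrow> real) \<Rightarrow> (real \<Rightarrow> real) \<Rightarrow> pt \<Rightarrow> real" where
  "sep_ty g q z = g (snd (snd z)) * q (fst (snd z))"

lemma DERIV_sep_ty_ex: "((\<lambda>s. sep_ty g q (z + s *\<^sub>R ex)) has_real_derivative 0) (at 0)"
proof -
  obtain x y t where z: "z = (x, y, t)" by (cases z) auto
  have "(\<lambda>s. sep_ty g q (z + s *\<^sub>R ex)) = (\<lambda>s. g t * q y)"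
    by (auto simp: z sep_ty_def ex_def)
  then show ?thesis
    by simp
qed

lemma DERIV_sep_ty_ey:
  assumes "\<And>y. (q has_real_derivative q' y) (at y)"
  shows "((\<lambda>s. sep_ty g q (z + s *\<^sub>R ey)) has_real_derivative sep_ty g q' z) (at 0)"
proof -
  obtain x y t where z: "z = (x, y, t)" by (cases z) auto
  have "(\<lambda>s. sep_ty g q (z + s *\<^sub>R ey)) = (\<lambda>s. g t * q (y + s))"
    by (auto simp: z sep_ty_def ey_def)
  moreover have "((\<lambda>s. q (y + s)) has_real_derivative q' (y + 0) * 1) (at 0)"
    by (rule DERIV_chain2[OF assms]) (auto intro!: derivative_eq_intros)
  then have "((\<lambda>s. g t * q (y + s)) has_real_derivative g t * q' y) (at 0)"
    by (auto intro: DERIV_cmult)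
  ultimately show ?thesis
    by (simp add: z sep_ty_def)
qed

lemma DERIV_sep_ty_et:
  assumes "\<And>t. (g has_real_derivative g' t) (at t)"
  shows "((\<lambda>s. sep_ty g q (z + s *\<^sub>R et)) has_real_derivative sep_ty g' q z) (at 0)"
proof -
  obtain x y t where z: "z = (x, y, t)" by (cases z) auto
  have "(\<lambda>s. sep_ty g q (z + s *\<^sub>R et)) = (\<lambda>s. g (t + s) * q y)"
    by (auto simp: z sep_ty_def et_def)
  moreover have "((\<lambda>s. g (t + s)) has_real_derivative g' (t + 0) * 1) (at 0)"
    by (rule DERIV_chain2[OF assms]) (auto intro!: derivative_eq_intros)
  then have "((\<lambda>s. g (t + s) * q y) has_real_derivative g' t * q y) (at 0)"
    by (auto intro: DERIV_cmult_right)
  ultimately show ?thesis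
    by (simp add: z sep_ty_def)
qed

lemma pd_sep_ty_ex: "pd (sep_ty g q) ex = (\<lambda>_. 0)"
  by (rule ext) (simp add: pd_def DERIV_imp_deriv[OF DERIV_sep_ty_ex])

lemma pd_sep_ty_ey: "(\<And>y. (q has_real_derivative q' y) (at y)) \<Longrightarrow> pd (sep_ty g q) ey = sep_ty g q'"
  by (rule ext) (simp add: pd_def DERIV_imp_deriv[OF DERIV_sep_ty_ey])

lemma pd_sep_ty_et: "(\<And>t. (g has_real_derivative g' t) (at t)) \<Longrightarrow> pd (sep_ty g q) et = sep_ty g' q"
  by (rule ext) (simp add: pd_def DERIV_imp_deriv[OF DERIV_sep_ty_et])

lemma continuous_on_sep_ty:
  assumes "continuous_on UNIV g" "continuous_on UNIV q"
  shows "continuous_on UNIV (sep_ty g q)"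
proof -
  have "continuous_on UNIV (\<lambda>z::pt. g (snd (snd z)))" "continuous_on UNIV (\<lambda>z::pt. q (fst (snd z)))"
    by (rule continuous_on_compose2[OF assms(1)] continuous_on_compose2[OF assms(2)];
        auto intro!: continuous_intros)+
  then show ?thesis
    unfolding sep_ty_def[abs_def] by (intro continuous_on_mult)
qed

lemma continuous_on_if_DERIV: "(\<And>t. (g has_real_derivative g' t) (at t)) \<Longrightarrow> continuous_on UNIV g"
  by (intro continuous_at_imp_continuous_on) (auto intro: DERIV_isCont)

lemma C1_fun_sep_ty:
  assumes dg: "\<And>t. (g has_real_derivative g' t) (at t)" and "continuous_on UNIV g'"
    and dq: "\<And>y. (q has_real_derivative q' y) (at y)" and "continuous_on UNIV q'"
  shows "C1_fun (sep_ty g q)"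
  unfolding C1_fun_def
  using assms continuous_on_if_DERIV[OF dg] continuous_on_if_DERIV[OF dq]
  by (auto simp: pd_sep_ty_ex pd_sep_ty_ey[OF dq] pd_sep_ty_et[OF dg] real_differentiable_def
      intro: DERIV_sep_ty_ex DERIV_sep_ty_ey[OF dq] DERIV_sep_ty_et[OF dg] continuous_on_sep_ty)

lemma C2_fun_sep_ty:
  assumes dg: "\<And>t. (g has_real_derivative g' t) (at t)"
    and dg': "\<And>t. (g' has_real_derivative g'' t) (at t)" and "continuous_on UNIV g''"
    and dq: "\<And>y. (q has_real_derivative q' y) (at y)"
    and dq': "\<And>y. (q' has_real_derivative q'' y) (at y)" and "continuous_on UNIV q''"
  shows "C2_fun (sep_ty g q)"
proof -
  have cont: "continuous_on UNIV g'" "continuous_on UNIV q'"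
    using dg' dq' by (auto intro: continuous_on_if_DERIV)
  have "pd (sep_ty g q) ex = sep_ty (\<lambda>_. 0) q"
    unfolding pd_sep_ty_ex by (simp add: sep_ty_def fun_eq_iff)
  moreover have "C1_fun (sep_ty (\<lambda>_. 0) q)"
    by (rule C1_fun_sep_ty[OF DERIV_const _ dq]) (use cont in auto)
  moreover have "C1_fun (sep_ty g q)" "C1_fun (sep_ty g q')" "C1_fun (sep_ty g' q)"
    using C1_fun_sep_ty[OF dg cont(1) dq cont(2)] C1_fun_sep_ty[OF dg cont(1) dq' assms(6)]
      C1_fun_sep_ty[OF dg' assms(3) dq cont(2)] by auto
  ultimately show ?thesis
    by (simp add: C2_fun_def pd_sep_ty_ey[OF dq] pd_sep_ty_et[OF dg])
qed

lemma periodic_T2_sep_ty_cos: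
  assumes "k \<in> \<int>"
  shows "periodic_T2 (sep_ty g (\<lambda>y. cos (k * y)))"
proof -
  obtain n where n: "k = of_int n"
    using assms Ints_cases by blast
  have "cos (k * (y + 2 * pi)) = cos (k * y)" for y
  proof -
    have "k * (y + 2 * pi) = k * y + (2 * pi) * of_int n"
      by (simp add: n algebra_simps)
    then show ?thesis
      by (simp add: cos_add)
  qed
  then show ?thesis
    unfolding periodic_T2_def sep_ty_def by simp
qed

lemma diag2_nth: "diag2 a b $ i $ j = (if i = j then if i = 1 then a else b else 0)"
  by (simp add: diag2_def)

lemma inner_diag2_mult: "\<xi> \<bullet> (diag2 a b *v \<xi>) = a * (\<xi> $ 1)^2 + b * (\<xi> $ 2)^2"
  by (simp add: diag2_def inner_vec_def matrix_vector_mult_def sum_2 power2_eq_square)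

lemma norm_vec2_power2: "norm (\<xi> :: real^2) ^ 2 = (\<xi> $ 1)^2 + (\<xi> $ 2)^2"
  by (simp only: power2_norm_eq_inner) (simp add: inner_vec_def sum_2 power2_eq_square)

lemma reg_class_diag2:
  fixes \<beta> \<beta>' :: "real \<Rightarrow> real"
  assumes a: "1/\<Lambda> \<le> a" "a \<le> \<Lambda>" and \<beta>: "\<And>t. 1/\<Lambda> \<le> \<beta> t" "\<And>t. \<beta> t \<le> \<Lambda>"
    and d\<beta>: "\<And>t. (\<beta> has_real_derivative \<beta>' t) (at t)" and "continuous_on UNIV \<beta>'"
    and \<beta>'_bound: "\<And>t. \<bar>\<beta>' t\<bar> \<le> C"
  shows "reg_class \<Lambda> C (\<lambda>z. diag2 a (\<beta> (snd (snd z))))"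
proof -
  have entry: "(\<lambda>z. diag2 a (\<beta> (snd (snd z))) $ i $ j) = sep_ty (\<lambda>t. diag2 a (\<beta> t) $ i $ j) (\<lambda>_. 1)"
    for i j by (simp add: sep_ty_def fun_eq_iff)
  have d_entry: "((\<lambda>t. diag2 a (\<beta> t) $ i $ j) has_real_derivative diag2 0 (\<beta>' t) $ i $ j) (at t)"
    for i j t by (auto simp: diag2_nth intro: d\<beta>)
  have c_entry: "continuous_on UNIV (\<lambda>t. diag2 0 (\<beta>' t) $ i $ j)" for i j
    using assms(6) by (cases "i = j"; cases "i = 1") (simp_all add: diag2_nth)
  have "\<bar>diag2 0 (\<beta>' t) $ i $ j\<bar> \<le> C" for i j t
    using \<beta>'_bound[of t] \<beta>'_bound[of 0] by (auto simp: diag2_nth)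
  moreover have "pd (\<lambda>z. diag2 a (\<beta> (snd (snd z))) $ i $ j) ex = (\<lambda>_. 0)"
    "pd (\<lambda>z. diag2 a (\<beta> (snd (snd z))) $ i $ j) ey = sep_ty (\<lambda>t. diag2 a (\<beta> t) $ i $ j) (\<lambda>_. 0)"
    "pd (\<lambda>z. diag2 a (\<beta> (snd (snd z))) $ i $ j) et = sep_ty (\<lambda>t. diag2 0 (\<beta>' t) $ i $ j) (\<lambda>_. 1)"
    for i j unfolding entry pd_sep_ty_ex pd_sep_ty_ey[OF DERIV_const] pd_sep_ty_et[OF d_entry] by simp_all
  ultimately have pd_bound: "\<bar>pd (\<lambda>z. diag2 a (\<beta> (snd (snd z))) $ i $ j) v p\<bar> \<le> C"
    if "v \<in> {ex, ey, et}" for i j v p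
    using that \<beta>'_bound[of 0] by (auto simp: sep_ty_def)
  have elliptic: "1/\<Lambda> * norm \<xi> ^ 2 \<le> \<xi> \<bullet> (diag2 a b *v \<xi>) \<and> \<xi> \<bullet> (diag2 a b *v \<xi>) \<le> \<Lambda> * norm \<xi> ^ 2"
    if "1/\<Lambda> \<le> b" "b \<le> \<Lambda>" for b and \<xi> :: "real^2"
  proof -
    have "1/\<Lambda> * (\<xi> $ 1)^2 \<le> a * (\<xi> $ 1)^2" "a * (\<xi> $ 1)^2 \<le> \<Lambda> * (\<xi> $ 1)^2"
      "1/\<Lambda> * (\<xi> $ 2)^2 \<le> b * (\<xi> $ 2)^2" "b * (\<xi> $ 2)^2 \<le> \<Lambda> * (\<xi> $ 2)^2"
      by (rule mult_right_mono; use a that in simp)+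
    then show ?thesis
      unfolding inner_diag2_mult norm_vec2_power2 by (simp add: algebra_simps)
  qed
  show ?thesis
    unfolding reg_class_def
    using elliptic \<beta> pd_bound C1_fun_sep_ty[OF d_entry c_entry DERIV_const, of _ _ 1]
    by (auto simp: entry)
qed

lemma solves_eq_diag2_sep_ty_cos:
  assumes dg: "\<And>t. (g has_real_derivative g' t) (at t)"
    and dg': "\<And>t. (g' has_real_derivative k^2 * \<beta> t * g t) (at t)"
  shows "solves_eq (\<lambda>z. diag2 a (\<beta> (snd (snd z)))) (sep_ty g (\<lambda>y. cos (k * y)))"
proof -
  let ?u = "sep_ty g (\<lambda>y. cos (k * y))"
  let ?A = "\<lambda>z. diag2 a (\<beta> (snd (snd z)))"
  have dcos: "((\<lambda>y. cos (k * y)) has_real_derivative - k * sin (k * y)) (at y)"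
    "((\<lambda>y. - k * sin (k * y)) has_real_derivative - k * (k * cos (k * y))) (at y)" for y
    by (auto intro!: derivative_eq_intros)
  define flux where "flux i = (\<lambda>z. \<Sum>j\<in>UNIV. ?A z $ i $ j * pd ?u (sdir j) z)" for i
  have flux1: "flux 1 = sep_ty (\<lambda>_. 0) (\<lambda>_. 0)"
    unfolding flux_def
    by (simp add: sum_2 sdir_def diag2_nth sep_ty_def pd_sep_ty_ex fun_eq_iff)
  have flux2: "flux 2 = sep_ty (\<lambda>t. \<beta> t * g t) (\<lambda>y. - k * sin (k * y))"
    unfolding flux_def by (simp add: sum_2 sdir_def diag2_nth pd_sep_ty_ex pd_sep_ty_ey[OF dcos(1)])
      (simp add: sep_ty_def fun_eq_iff)
  have "pd (pd ?u et) et p + (pd (sep_ty (\<lambda>_. 0) (\<lambda>_. 0)) ex p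
      + pd (sep_ty (\<lambda>t. \<beta> t * g t) (\<lambda>y. - k * sin (k * y))) ey p) = 0" for p
    unfolding pd_sep_ty_et[OF dg] pd_sep_ty_et[OF dg'] pd_sep_ty_ex pd_sep_ty_ey[OF dcos(2)]
    by (simp add: sep_ty_def algebra_simps power2_eq_square)
  then show ?thesis
    unfolding solves_eq_def flux_def[symmetric] unfolding sum_2 flux1 flux2 by (simp add: sdir_def)
qed

lemma C2_realI:
  assumes "\<And>t. (g has_real_derivative g' t) (at t)" "\<And>t. (g' has_real_derivative g'' t) (at t)"
    and "continuous_on UNIV g''"
  shows "C2_real g"
proof -
  have "deriv g = g'" "deriv g' = g''"
    using assms by (auto intro!: DERIV_imp_deriv)
  then show ?thesis
    unfolding C2_real_def using assms by (auto simp: real_differentiable_def)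
qed

section \<open>The transition profile\<close>

text \<open>Here \<open>b0\<close> and \<open>b1\<close> stand for \<open>sqrt b\<close> and \<open>sqrt b'\<close>.\<close>

locale phase_transition =
  fixes k c1 c2 b0 b1 t1 :: real
  assumes k_ge: "1000 \<le> k"
    and b0: "1/10 < b0^2" "0 \<le> b0" and b1: "b1^2 < 10" "b0 \<le> b1"
    and c1_pos: "0 < c1"
    and c2: "c1 * exp (- k * b0 * t1) = c2 * exp (- k * b1 * t1)"
begin

definition "phase t = b0 * t + 400 * (b1 - b0) * ramp0 ((t - t1) / 400)"
definition "phase1 t = b0 + (b1 - b0) * ramp1 ((t - t1) / 400)"
definition "phase2 t = (b1 - b0) * ramp2 ((t - t1) / 400) / 400"
definition "phase3 t = (b1 - b0) * ramp3 ((t - t1) / 400) / 160000"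

definition "profile t = c1 * exp (- k * phase t)"
definition "profile1 t = - k * phase1 t * profile t"

definition "coef t = (phase1 t)^2 - phase2 t / k"
definition "coef1 t = 2 * phase1 t * phase2 t - phase3 t / k"

lemma k_pos: "0 < k"
  using k_ge by simp

lemma DERIV_ramp_rescaled:
  assumes "\<And>s. (f has_real_derivative f' s) (at s)"
  shows "((\<lambda>t. f ((t - t1) / 400)) has_real_derivative f' ((t - t1) / 400) / 400) (at t)"
proof -
  have "((\<lambda>t. (t - t1) / 400) has_real_derivative 1 / 400) (at t)"
    by (auto intro!: derivative_eq_intros)
  from DERIV_chain2[OF assms this] show ?thesis
    by simp
qed

lemma DERIV_phase: "(phase has_real_derivative phase1 t) (at t)"
  unfolding phase_def[abs_def] phase1_def
  by (auto intro!: derivative_eq_intros DERIV_ramp_rescaled[OF DERIV_ramp0])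

lemma DERIV_phase1: "(phase1 has_real_derivative phase2 t) (at t)"
  unfolding phase1_def[abs_def] phase2_def
  by (auto intro!: derivative_eq_intros DERIV_ramp_rescaled[OF DERIV_ramp1])

lemma DERIV_phase2: "(phase2 has_real_derivative phase3 t) (at t)"
  unfolding phase2_def[abs_def] phase3_def
  by (auto intro!: derivative_eq_intros DERIV_ramp_rescaled[OF DERIV_ramp2])

lemma continuous_on_phase3: "continuous_on UNIV phase3"
proof -
  have "continuous_on UNIV (\<lambda>t. ramp3 ((t - t1) / 400))"
    by (rule continuous_on_compose2[OF continuous_on_ramp3]) (auto intro!: continuous_intros)
  then show ?thesis
    unfolding phase3_def[abs_def] by (auto intro!: continuous_intros)
qed

lemma DERIV_profile: "(profile has_real_derivative profile1 t) (at t)"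
  unfolding profile_def[abs_def] profile1_def
  by (auto intro!: derivative_eq_intros DERIV_phase)

lemma DERIV_profile1: "(profile1 has_real_derivative k^2 * coef t * profile t) (at t)"
  unfolding profile1_def[abs_def] coef_def
  by (auto intro!: derivative_eq_intros DERIV_phase1 DERIV_profile
      simp: profile1_def power2_eq_square algebra_simps)

lemma DERIV_coef: "(coef has_real_derivative coef1 t) (at t)"
  unfolding coef_def[abs_def] coef1_def
  using k_pos by (auto intro!: derivative_eq_intros DERIV_phase1 DERIV_phase2 simp: power2_eq_square)

lemma continuous_on_coef1: "continuous_on UNIV coef1"
  using continuous_on_phase3 continuous_on_if_DERIV[OF DERIV_phase1]
    continuous_on_if_DERIV[OF DERIV_phase2]
  unfolding coef1_def[abs_def] using k_pos by (auto intro!: continuous_intros)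

lemma continuous_on_profile2: "continuous_on UNIV (\<lambda>t. k^2 * coef t * profile t)"
  using continuous_on_if_DERIV[OF DERIV_coef] continuous_on_if_DERIV[OF DERIV_profile]
  by (auto intro!: continuous_intros)

lemma b1_less: "b1 < 317/100"
proof (rule ccontr)
  assume "\<not> b1 < 317/100"
  then have "(317/100)^2 \<le> b1^2"
    by (intro power_mono) auto
  then show False
    using b1 by (simp add: power2_eq_square)
qed

lemma phase1_bounds: "b0 \<le> phase1 t" "phase1 t \<le> 67/10"
proof -
  let ?r = "ramp1 ((t - t1) / 400)"
  have r: "0 \<le> ?r" "?r \<le> 21/10"
    using ramp1_bounds by auto
  show "b0 \<le> phase1 t"
    unfolding phase1_def using r b1 by simp
  have "(b1 - b0) * ?r \<le> (b1 - b0) * (21/10)"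
    using r b1 by (intro mult_left_mono) auto
  then show "phase1 t \<le> 67/10"
    unfolding phase1_def using b1_less b0 by (simp add: algebra_simps)
qed

lemma phase2_bound: "\<bar>phase2 t\<bar> \<le> 1/8"
proof -
  have "\<bar>b1 - b0\<bar> * \<bar>ramp2 ((t - t1) / 400)\<bar> \<le> (317/100) * 15"
    using b1 b1_less b0 ramp2_bound by (intro mult_mono) auto
  then show ?thesis
    unfolding phase2_def by (simp add: abs_mult)
qed

lemma phase3_bound: "\<bar>phase3 t\<bar> \<le> 1/5"
proof -
  have "\<bar>b1 - b0\<bar> * \<bar>ramp3 ((t - t1) / 400)\<bar> \<le> (317/100) * 9600"
    using b1 b1_less b0 ramp3_bound by (intro mult_mono) auto
  then show ?thesis
    unfolding phase3_def by (simp add: abs_mult)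
qed

lemma abs_divide_k_le: "\<bar>x / k\<bar> \<le> \<bar>x\<bar> / 1000"
proof -
  have "\<bar>x / k\<bar> = \<bar>x\<bar> / k"
    using k_pos by simp
  also have "\<dots> \<le> \<bar>x\<bar> / 1000"
    using k_ge by (intro divide_left_mono) auto
  finally show ?thesis .
qed

lemma coef_bounds: "1/80 \<le> coef t" "coef t \<le> 80"
proof -
  have "b0^2 \<le> (phase1 t)^2" "(phase1 t)^2 \<le> (67/10)^2"
    using phase1_bounds[of t] b0 by (auto intro: power_mono)
  moreover have "\<bar>phase2 t / k\<bar> \<le> 1/8000"
    using abs_divide_k_le[of "phase2 t"] phase2_bound[of t] by linarith
  ultimately show "1/80 \<le> coef t" "coef t \<le> 80"
    unfolding coef_def abs_le_iff using b0 by (simp_all add: power_divide)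
qed

lemma coef1_bound: "\<bar>coef1 t\<bar> \<le> 10"
proof -
  have "\<bar>phase1 t\<bar> * \<bar>phase2 t\<bar> \<le> (67/10) * (1/8)"
    using phase1_bounds[of t] b0 phase2_bound by (intro mult_mono) auto
  then have "\<bar>phase1 t * phase2 t\<bar> \<le> 67/80"
    by (simp add: abs_mult)
  moreover have "\<bar>phase3 t / k\<bar> \<le> 1/5000"
    using abs_divide_k_le[of "phase3 t"] phase3_bound[of t] by linarith
  ultimately show ?thesis
    unfolding coef1_def abs_le_iff by linarith
qed

lemma profile_pos: "0 < profile t"
  unfolding profile_def using c1_pos by simp

lemma profile_le: "profile t \<le> c1 * exp (- k * b0 * t)"
proof -
  have "b0 * t \<le> phase t"
    unfolding phase_def using b1 ramp0_nonneg by simp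
  then have "- k * phase t \<le> - k * (b0 * t)"
    using k_pos by (intro mult_left_mono_neg) auto
  then show ?thesis
    unfolding profile_def using c1_pos by simp
qed

lemma profile_before:
  assumes "t \<le> t1"
  shows "profile t = c1 * exp (- k * b0 * t)" "coef t = b0^2"
  using assms ramp_nonpos[of "(t - t1) / 400"]
  by (simp_all add: profile_def phase_def coef_def phase1_def phase2_def)

lemma profile_after:
  assumes "t1 + 400 \<le> t"
  shows "profile t = c2 * exp (- k * b1 * t)" "coef t = b1^2"
proof -
  have r: "ramp0 ((t - t1) / 400) = (t - t1) / 400" "ramp1 ((t - t1) / 400) = 1"
    "ramp2 ((t - t1) / 400) = 0"
    using assms by (simp_all add: ramp_ge_one)
  show "coef t = b1^2"
    by (simp add: coef_def phase1_def phase2_def r)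
  have c2_eq: "c2 = c1 * exp (k * (b1 - b0) * t1)"
    using c2 by (simp add: exp_diff exp_minus field_simps flip: exp_add)
  have phase_eq: "phase t = b1 * t - (b1 - b0) * t1"
    by (simp add: phase_def r field_simps)
  have "- k * phase t = k * (b1 - b0) * t1 + (- k * b1 * t)"
    unfolding phase_eq by (simp add: algebra_simps)
  then have "profile t = c1 * exp (k * (b1 - b0) * t1 + (- k * b1 * t))"
    unfolding profile_def by simp
  with c2_eq show "profile t = c2 * exp (- k * b1 * t)"
    by (simp only: exp_add mult.assoc)
qed

lemma profile_deriv_bound:
  assumes "\<alpha> \<le> 2"
  shows "\<bar>(deriv ^^ \<alpha>) profile t\<bar> \<le> 100 * c1 * k ^ \<alpha> * exp (- k * b0 * t)"
proof -
  have deriv: "deriv profile = profile1" "deriv profile1 = (\<lambda>t. k^2 * coef t * profile t)"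
    using DERIV_profile DERIV_profile1 by (auto intro!: DERIV_imp_deriv)
  let ?X = "c1 * exp (- k * b0 * t)"
  have g: "0 < profile t" "profile t \<le> ?X"
    using profile_pos profile_le by auto
  have "\<bar>profile1 t\<bar> = k * (phase1 t * profile t)"
    unfolding profile1_def using k_pos phase1_bounds[of t] b0 g by (simp add: abs_mult)
  also have "\<dots> \<le> k * (100 * ?X)"
    using k_pos phase1_bounds[of t] g by (intro mult_left_mono mult_mono) auto
  finally have "\<bar>profile1 t\<bar> \<le> 100 * c1 * k * exp (- k * b0 * t)"
    by (simp add: algebra_simps)
  moreover have "\<bar>k^2 * coef t * profile t\<bar> \<le> 100 * c1 * k^2 * exp (- k * b0 * t)"
  proof -
    have "\<bar>k^2 * coef t * profile t\<bar> = k^2 * (coef t * profile t)"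
      using coef_bounds[of t] g by (simp add: abs_mult)
    also have "\<dots> \<le> k^2 * (100 * ?X)"
      using coef_bounds[of t] g by (intro mult_left_mono mult_mono) auto
    finally show ?thesis
      by (simp add: algebra_simps)
  qed
  moreover have "\<alpha> = 0 \<or> \<alpha> = 1 \<or> \<alpha> = 2"
    using assms by auto
  ultimately show ?thesis
    using g c1_pos by (auto simp: deriv numeral_2_eq_2)
qed

end

lemma (in phase_transition) transition_solution:
  assumes "k \<in> \<int>" "1/10 < a" "a < 10"
  shows "\<exists>(u :: pt \<Rightarrow> real) (A :: pt \<Rightarrow> real^2^2).
    C2_fun u \<and> periodic_T2 u \<and> periodic_T2 A \<and> reg_class 80 10 A \<and> solves_eq A u \<and>
    (\<forall>x y t. t \<le> t1 \<longrightarrow> u (x, y, t) = c1 * (cos (k * y) * exp (- k * b0 * t))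
                         \<and> A (x, y, t) = diag2 a (b0^2)) \<and>
    (\<forall>x y t. t1 + 400 \<le> t \<longrightarrow> u (x, y, t) = c2 * (cos (k * y) * exp (- k * b1 * t))
                         \<and> A (x, y, t) = diag2 a (b1^2)) \<and>
    (\<exists>g. C2_real g \<and> (\<forall>x y t. t \<in> {t1..t1+400} \<longrightarrow> u (x, y, t) = g t * cos (k * y)) \<and>
      (\<forall>\<alpha>::nat. \<forall>t. \<alpha> \<le> 2 \<longrightarrow> t \<in> {t1..t1+400} \<longrightarrow>
         \<bar>(deriv ^^ \<alpha>) g t\<bar> \<le> 100 * c1 * k ^ \<alpha> * exp (- k * b0 * t)))"
proof -
  let ?u = "sep_ty profile (\<lambda>y. cos (k * y))"
  let ?A = "\<lambda>z::pt. diag2 a (coef (snd (snd z)))"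
  have "C2_fun ?u"
    by (rule C2_fun_sep_ty[OF DERIV_profile DERIV_profile1 continuous_on_profile2,
          where q' = "\<lambda>y. - k * sin (k * y)" and q'' = "\<lambda>y. - k * (k * cos (k * y))"])
      (auto intro!: derivative_eq_intros continuous_intros)
  moreover have "periodic_T2 ?u" "periodic_T2 ?A"
    using periodic_T2_sep_ty_cos[OF assms(1)] by (auto simp: periodic_T2_def)
  moreover have "reg_class 80 10 ?A"
    using assms coef_bounds coef1_bound
    by (intro reg_class_diag2[OF _ _ _ _ DERIV_coef continuous_on_coef1]) auto
  moreover have "solves_eq ?A ?u"
    by (rule solves_eq_diag2_sep_ty_cos[OF DERIV_profile DERIV_profile1])
  moreover have "C2_real profile"
    by (rule C2_realI[OF DERIV_profile DERIV_profile1 continuous_on_profile2])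
  ultimately show ?thesis
    using profile_before profile_after profile_deriv_bound
    by (intro exI[of _ ?u] exI[of _ ?A] conjI exI[of _ profile]) (auto simp: sep_ty_def)
qed

theorem mainTheorem12:
  shows "\<exists>K M :: real. \<forall>k :: int. \<forall>a b b' t1 c1 :: real.
    real_of_int k \<ge> K \<longrightarrow> a \<in> {1/10<..<10} \<longrightarrow> b \<in> {1/10<..<10} \<longrightarrow> b' \<in> {1/10<..<10}
    \<longrightarrow> b \<le> b' \<longrightarrow> t1 \<ge> 0 \<longrightarrow> c1 > 0 \<longrightarrow>
    (\<forall>c2 :: real. c2 > 0 \<longrightarrow> c1 * exp (- real_of_int k * sqrt b * t1) = c2 * exp (- real_of_int k * sqrt b' * t1) \<longrightarrow>
      (\<exists>(u :: pt \<Rightarrow> real) (A :: pt \<Rightarrow> real^2^2).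
         C2_fun u \<and> periodic_T2 u \<and> periodic_T2 A \<and> reg_class 80 10 A \<and> solves_eq A u \<and>
         (\<forall>(x::real) (y::real) (t::real). t \<le> t1 \<longrightarrow> u (x, y, t) = c1 * (cos (real_of_int k * y) * exp (- real_of_int k * sqrt b * t))
                               \<and> A (x, y, t) = diag2 a b) \<and>
         (\<forall>(x::real) (y::real) (t::real). t \<ge> t1 + 400 \<longrightarrow> u (x, y, t) = c2 * (cos (real_of_int k * y) * exp (- real_of_int k * sqrt b' * t))
                               \<and> A (x, y, t) = diag2 a b') \<and>
         (\<exists>g :: real \<Rightarrow> real. C2_real g \<and>
            (\<forall>(x::real) (y::real) (t::real). t \<in> {t1..t1+400} \<longrightarrow> u (x, y, t) = g t * cos (real_of_int k * y)) \<and>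
            (\<forall>\<alpha>::nat. \<forall>t. \<alpha> \<le> 2 \<longrightarrow> t \<in> {t1..t1+400} \<longrightarrow>
               \<bar>(deriv ^^ \<alpha>) g t\<bar> \<le> M * c1 * real_of_int k ^ \<alpha> * exp (- real_of_int k * sqrt b * t)))))"
proof (rule exI[of _ 1000], rule exI[of _ 100], intro allI impI, goal_cases)
  case (1 k a b b' t1 c1 c2)
  then have "phase_transition (real_of_int k) c1 c2 (sqrt b) (sqrt b') t1"
    by unfold_locales (auto simp: real_sqrt_le_mono)
  moreover have "(sqrt b)^2 = b" "(sqrt b')^2 = b'"
    using 1 by auto
  ultimately show ?case
    using phase_transition.transition_solution[of "real_of_int k" c1 c2 "sqrt b" "sqrt b'" t1 a] 1
    by simp
qed

end
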